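(* Let $p\ge1$, $\phi_1,\dots,\phi_p:\mathbb Z\to\mathbb C$ and $s\in\mathbb Z$. The $p$ functions $t\mapsto\xi^{(m)}_{t,s}$ ($1\le m\le p$), defined on $\mathbb Z_{s-p+1}=\{s-p+1,s-p+2,\dots\}$, form a fundamental set of solutions of the homogeneous equation $y_t=\sum_{l=1}^p\phi_l(t)y_{t-l}$ ($t\ge s+1$): they are solutions, they are linearly independent, and every solution $y:\mathbb Z_{s-p+1}\to\mathbb C$ of this equation is a linear combination of them.
   Context: Convention: $\phi_l(t)=0$ for $l>p$. For integers $t>s$ and $1\le m\le p$, $\Phi^{(m)}_{t,s}$ is the $(t-s)\times(t-s)$ lower Hessenberg matrix whose $(i,j)$ entry is: $\phi_{m+i-1}(s+i)$ if $j=1$; $-1$ if $j=i+1$; $\phi_{i-j+1}(s+i)$ if $2\le j\le i$; $0$ if $j>i+1$. For $t\ge s-p+1$: $\xi^{(m)}_{t,s}=\det\Phi^{(m)}_{t,s}$ if $t>s$; $\xi^{(m)}_{t,s}=1$ if $t=s-m+1$; $\xi^{(m)}_{t,s}=0$ if $s-p+1\le t\le s$, $t\ne s-m+1$. *)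

theory Defs
  imports Complex_Main "Jordan_Normal_Form.Determinant"
begin

definition phi_ext :: "nat \<Rightarrow> (nat \<Rightarrow> int \<Rightarrow> complex) \<Rightarrow> nat \<Rightarrow> int \<Rightarrow> complex" where
  "phi_ext p \<phi> l t = (if 1 \<le> l \<and> l \<le> p then \<phi> l t else 0)"

text \<open>The (t-s)x(t-s) lower Hessenberg matrix Phi^(m)_{t,s}; Jordan_Normal_Form matrices
  are 0-indexed, so entry (i,j) here is entry (i+1,j+1) of the paper.\<close>
definition Phi_mat :: "nat \<Rightarrow> (nat \<Rightarrow> int \<Rightarrow> complex) \<Rightarrow> nat \<Rightarrow> int \<Rightarrow> int \<Rightarrow> complex mat" where
  "Phi_mat p \<phi> m t s = mat (nat (t - s)) (nat (t - s)) (\<lambda>(i, j).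
     (let i1 = i + 1; j1 = j + 1 in
      if j1 = 1 then phi_ext p \<phi> (m + i1 - 1) (s + int i1)
      else if j1 = i1 + 1 then -1
      else if 2 \<le> j1 \<and> j1 \<le> i1 then phi_ext p \<phi> (i1 - j1 + 1) (s + int i1)
      else 0))"

text \<open>xi^(m)_{t,s}; meaningful for t >= s-p+1 (value 0 below that, irrelevant).\<close>
definition xi :: "nat \<Rightarrow> (nat \<Rightarrow> int \<Rightarrow> complex) \<Rightarrow> nat \<Rightarrow> int \<Rightarrow> int \<Rightarrow> complex" where
  "xi p \<phi> m t s = (if t > s then det (Phi_mat p \<phi> m t s)
                    else if t = s - int m + 1 then 1 else 0)"

end

theory Submission imports Defs begin

text \<open>The matrix \<open>Phi^(m)_{t,s}\<close> is lower Hessenberg with superdiagonal \<open>-1\<close>, so expanding its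
  determinant along the last row expresses \<open>xi^(m)_{t,s}\<close> through the determinants of its
  leading submatrices, i.e. through \<open>xi^(m)_{t',s}\<close> for \<open>t' < t\<close>; this is exactly the recurrence.
  On the initial window \<open>s-p+1, ..., s\<close> the functions \<open>xi^(1)\<close>, ..., \<open>xi^(p)\<close> are the unit
  vectors, which gives linear independence; and since a solution of the recurrence is
  determined by its values on that window, every solution \<open>y\<close> is the combination of the
  \<open>xi^(m)\<close> with coefficients \<open>y_{s-m+1}\<close>.\<close>

definition solves_recurrence ::
    "nat \<Rightarrow> (nat \<Rightarrow> int \<Rightarrow> 'a::comm_semiring_0) \<Rightarrow> int \<Rightarrow> (int \<Rightarrow> 'a) \<Rightarrow> bool" where
  "solves_recurrence p \<phi> s y \<longleftrightarrow> (\<forall>t \<ge> s + 1. y t = (\<Sum>l = 1..p. \<phi> l t * y (t - int l)))"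

lemma solves_recurrence_sum:
  assumes "\<And>m. m \<in> M \<Longrightarrow> solves_recurrence p \<phi> s (x m)"
  shows "solves_recurrence p \<phi> s (\<lambda>t. \<Sum>m\<in>M. c m * x m t)"
  unfolding solves_recurrence_def
proof (intro allI impI)
  fix t assume "t \<ge> s + 1"
  then have "(\<Sum>m\<in>M. c m * x m t) = (\<Sum>m\<in>M. \<Sum>l = 1..p. c m * (\<phi> l t * x m (t - int l)))"
    using assms by (intro sum.cong) (auto simp: solves_recurrence_def sum_distrib_left)
  also have "\<dots> = (\<Sum>l = 1..p. \<phi> l t * (\<Sum>m\<in>M. c m * x m (t - int l)))"
    by (subst sum.swap) (simp add: sum_distrib_left mult.left_commute)
  finally show "(\<Sum>m\<in>M. c m * x m t) = (\<Sum>l = 1..p. \<phi> l t * (\<Sum>m\<in>M. c m * x m (t - int l)))" .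
qed

lemma solves_recurrence_unique:
  assumes "solves_recurrence p \<phi> s y" "solves_recurrence p \<phi> s z"
    and initial: "\<And>t. s - int p + 1 \<le> t \<Longrightarrow> t \<le> s \<Longrightarrow> y t = z t"
    and "s - int p + 1 \<le> t"
  shows "y t = z t"
proof -
  have "\<forall>t. s - int p + 1 \<le> t \<and> t \<le> s + int n \<longrightarrow> y t = z t" for n
  proof (induction n)
    case 0 then show ?case using initial by auto
  next
    case (Suc n)
    show ?case
    proof (intro allI impI)
      fix t assume t: "s - int p + 1 \<le> t \<and> t \<le> s + int (Suc n)"
      show "y t = z t"
      proof (cases "t \<le> s + int n")
        case True then show ?thesis using Suc.IH t by auto
      next
        case False
        then have "y t = (\<Sum>l = 1..p. \<phi> l t * y (t - int l))"
          and "z t = (\<Sum>l = 1..p. \<phi> l t * z (t - int l))"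
          using assms(1,2) by (auto simp: solves_recurrence_def)
        moreover have "(\<Sum>l = 1..p. \<phi> l t * y (t - int l)) = (\<Sum>l = 1..p. \<phi> l t * z (t - int l))"
          using Suc.IH t False by (intro sum.cong) auto
        ultimately show ?thesis by simp
      qed
    qed
  qed
  from this[of "nat (t - s)"] show ?thesis using \<open>s - int p + 1 \<le> t\<close> by auto
qed

definition leading_submatrix :: "'a mat \<Rightarrow> nat \<Rightarrow> 'a mat" where
  "leading_submatrix A k = mat k k (\<lambda>(i, j). A $$ (i, j))"

lemma det_carrier_mat_0: "A \<in> carrier_mat 0 0 \<Longrightarrow> det (A :: 'a::comm_ring_1 mat) = 1"
  by (simp add: det_def')

lemma det_lower_hessenberg:
  fixes A :: "'a::comm_ring_1 mat"
  assumes "A \<in> carrier_mat n n" "n \<ge> 1"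
    and "\<And>i. i + 1 < n \<Longrightarrow> A $$ (i, i + 1) = -1"
    and "\<And>i j. i < n \<Longrightarrow> j < n \<Longrightarrow> i + 1 < j \<Longrightarrow> A $$ (i, j) = 0"
  shows "det A = (\<Sum>j<n. A $$ (n - 1, j) * det (leading_submatrix A j))"
  using assms
proof (induction n arbitrary: A)
  case 0 then show ?case by simp
next
  case (Suc n)
  show ?case
  proof (cases n)
    case 0
    have "det (mat_delete A 0 0) = 1" "det (leading_submatrix A 0) = 1"
      using Suc.prems(1) 0 by (auto intro!: det_carrier_mat_0 simp: mat_delete_def leading_submatrix_def)
    then show ?thesis
      using laplace_expansion_row[OF Suc.prems(1), of 0] 0 by (simp add: cofactor_def)
  next
    case (Suc k)
    have A: "A \<in> carrier_mat (Suc (Suc k)) (Suc (Suc k))" using Suc.prems(1) Suc by simp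
    \<comment> \<open>The minor of the superdiagonal entry of the last column is again of this shape, and its
      last row is the last row of \<open>A\<close>.\<close>
    define B where "B = mat_delete A k (Suc k)"
    have B_index: "B $$ (i, j) = A $$ (if i < k then i else Suc i, j)"
      if "i < Suc k" "j < Suc k" for i j
      using that A by (simp add: B_def mat_delete_def)
    have "det B = (\<Sum>j<Suc k. B $$ (k, j) * det (leading_submatrix B j))"
      using Suc.IH[of B] Suc.prems(3,4) A \<open>n = Suc k\<close>
      by (simp add: B_def mat_delete_def B_index[unfolded B_def])
    also have "\<dots> = (\<Sum>j<Suc k. A $$ (Suc k, j) * det (leading_submatrix A j))"
      by (intro sum.cong arg_cong2[where f = "(*)"] arg_cong[where f = det] eq_matI)
        (auto simp: leading_submatrix_def B_index)
    finally have det_B: "det B = \<dots>" .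
    have "mat_delete A (Suc k) (Suc k) = leading_submatrix A (Suc k)"
      using A by (intro eq_matI) (auto simp: leading_submatrix_def mat_delete_def)
    then have last: "A $$ (Suc k, Suc k) * cofactor A (Suc k) (Suc k)
        = A $$ (Suc k, Suc k) * det (leading_submatrix A (Suc k))"
      by (simp add: cofactor_def)
    have "(\<Sum>i<k. A $$ (i, Suc k) * cofactor A i (Suc k)) = 0"
      using Suc.prems(4) \<open>n = Suc k\<close> by (intro sum.neutral) auto
    moreover have "A $$ (k, Suc k) * cofactor A k (Suc k) = det B"
      using Suc.prems(3) \<open>n = Suc k\<close> by (simp add: cofactor_def B_def)
    ultimately have "det A = det B + A $$ (Suc k, Suc k) * cofactor A (Suc k) (Suc k)"
      using laplace_expansion_column[OF A, of "Suc k"] by simp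
    then show ?thesis using \<open>n = Suc k\<close> by (simp add: det_B last)
  qed
qed

lemma Phi_mat_carrier: "Phi_mat p \<phi> m t s \<in> carrier_mat (nat (t - s)) (nat (t - s))"
  by (simp add: Phi_mat_def)

lemma index_Phi_mat:
  "i < nat (t - s) \<Longrightarrow> j < nat (t - s) \<Longrightarrow> Phi_mat p \<phi> m t s $$ (i, j) =
    (if j = 0 then phi_ext p \<phi> (m + i) (s + int (Suc i))
     else if j = i + 1 then -1
     else if j \<le> i then phi_ext p \<phi> (i - j + 1) (s + int (Suc i))
     else 0)"
  by (simp add: Phi_mat_def Let_def)

lemma leading_submatrix_Phi_mat:
  "j \<le> nat (t - s) \<Longrightarrow> leading_submatrix (Phi_mat p \<phi> m t s) j = Phi_mat p \<phi> m (s + int j) s"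
  by (intro eq_matI) (auto simp: leading_submatrix_def Phi_mat_def Let_def)

lemma xi_last_row_expansion:
  assumes t: "t = s + int (Suc k)"
  shows "xi p \<phi> m t s = phi_ext p \<phi> (m + k) t + (\<Sum>l = 1..k. phi_ext p \<phi> l t * xi p \<phi> m (t - int l) s)"
proof -
  define A where "A = Phi_mat p \<phi> m t s"
  have n: "nat (t - s) = Suc k" using t by simp
  have A: "A \<in> carrier_mat (Suc k) (Suc k)" using Phi_mat_carrier[of p \<phi> m t s] by (simp add: A_def n)
  have A_index: "A $$ (i, j) =
      (if j = 0 then phi_ext p \<phi> (m + i) (s + int (Suc i))
       else if j = i + 1 then -1
       else if j \<le> i then phi_ext p \<phi> (i - j + 1) (s + int (Suc i))
       else 0)" if "i < Suc k" "j < Suc k" for i j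
    using that index_Phi_mat[of i t s j] by (simp add: A_def n)
  have det_leading: "det (leading_submatrix A j) = (if j = 0 then 1 else xi p \<phi> m (s + int j) s)"
    if "j \<le> Suc k" for j
  proof (cases "j = 0")
    case True then show ?thesis by (simp add: leading_submatrix_def det_carrier_mat_0)
  next
    case False then show ?thesis
      using that leading_submatrix_Phi_mat[of j t s] by (simp add: A_def n xi_def)
  qed
  have "xi p \<phi> m t s = det A" by (simp add: xi_def A_def t)
  also have "\<dots> = (\<Sum>j<Suc k. A $$ (k, j) * det (leading_submatrix A j))"
    using det_lower_hessenberg[OF A] by (simp add: A_index)
  also have "\<dots> = A $$ (k, 0) * det (leading_submatrix A 0)
      + (\<Sum>j<k. A $$ (k, Suc j) * det (leading_submatrix A (Suc j)))"
    by (simp only: sum.lessThan_Suc_shift)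
  also have "A $$ (k, 0) * det (leading_submatrix A 0) = phi_ext p \<phi> (m + k) t"
    by (simp add: A_index det_leading t)
  also have "(\<Sum>j<k. A $$ (k, Suc j) * det (leading_submatrix A (Suc j)))
      = (\<Sum>j<k. phi_ext p \<phi> (k - j) t * xi p \<phi> m (s + int (Suc j)) s)"
    by (intro sum.cong) (auto simp: A_index det_leading t Suc_diff_Suc)
  also have "\<dots> = (\<Sum>l = 1..k. phi_ext p \<phi> l t * xi p \<phi> m (t - int l) s)"
    by (rule sum.reindex_bij_witness[where i = "\<lambda>l. k - l" and j = "\<lambda>j. k - j"]) (auto simp: t)
  finally show ?thesis .
qed

lemma xi_solves_recurrence:
  assumes "m \<in> {1..p}"
  shows "solves_recurrence p \<phi> s (\<lambda>t. xi p \<phi> m t s)"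
  unfolding solves_recurrence_def
proof (intro allI impI)
  fix t assume "t \<ge> s + 1"
  define k where "k = nat (t - s - 1)"
  have t: "t = s + int (Suc k)" using \<open>t \<ge> s + 1\<close> by (simp add: k_def)
  \<comment> \<open>The range \<open>1..p+k+m\<close> contains both \<open>1..p\<close> and the index \<open>m + k\<close>; \<open>phi_ext\<close> vanishes
    on the surplus.\<close>
  define f where "f l = phi_ext p \<phi> l t * xi p \<phi> m (t - int l) s" for l
  \<comment> \<open>For \<open>l > k\<close> we have \<open>t - l \<le> s\<close>, where \<open>\<xi>\<^sup>(\<^sup>m\<^sup>)\<close> vanishes except at \<open>l = m + k\<close>.\<close>
  have "(\<Sum>l = Suc k..p + k + m. f l) = (\<Sum>l = Suc k..p + k + m. if l = m + k then phi_ext p \<phi> l t else 0)"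
    by (intro sum.cong) (auto simp: f_def xi_def t)
  also have "\<dots> = phi_ext p \<phi> (m + k) t" using assms by (simp add: sum.delta)
  finally have high: "(\<Sum>l = Suc k..p + k + m. f l) = phi_ext p \<phi> (m + k) t" .
  have "{1..p + k + m} = {1..k} \<union> {Suc k..p + k + m}" by auto
  then have "(\<Sum>l = 1..p + k + m. f l) = (\<Sum>l = 1..k. f l) + (\<Sum>l = Suc k..p + k + m. f l)"
    by (simp add: sum.union_disjoint ivl_disj_int)
  also have "\<dots> = xi p \<phi> m t s"
    using xi_last_row_expansion[OF t, of p \<phi> m] high unfolding f_def by (simp add: add.commute)
  finally have "xi p \<phi> m t s = (\<Sum>l = 1..p + k + m. f l)" ..
  also have "\<dots> = (\<Sum>l = 1..p. f l)"
    by (rule sum.mono_neutral_right) (auto simp: f_def phi_ext_def)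
  finally show "xi p \<phi> m t s = (\<Sum>l = 1..p. \<phi> l t * xi p \<phi> m (t - int l) s)"
    by (simp add: f_def phi_ext_def)
qed

lemma sum_xi_initial:
  assumes "m \<in> {1..p}"
  shows "(\<Sum>m' = 1..p. c m' * xi p \<phi> m' (s - int m + 1) s) = c m"
proof -
  have "(\<Sum>m' = 1..p. c m' * xi p \<phi> m' (s - int m + 1) s) = (\<Sum>m' = 1..p. if m' = m then c m' else 0)"
    using assms by (intro sum.cong) (auto simp: xi_def)
  also have "\<dots> = c m" using assms by (simp add: sum.delta)
  finally show ?thesis .
qed

theorem proposition2:
  fixes p :: nat and \<phi> :: "nat \<Rightarrow> int \<Rightarrow> complex" and s :: int
  assumes "p \<ge> 1"
  shows
    \<comment> \<open>each xi^(m)_{.,s} solves the homogeneous equation\<close>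
    "(\<forall>m \<in> {1..p}. \<forall>t \<ge> s + 1.
        xi p \<phi> m t s = (\<Sum>l = 1..p. \<phi> l t * xi p \<phi> m (t - int l) s))
   \<and> \<comment> \<open>linear independence on Z_{s-p+1}\<close>
     (\<forall>c :: nat \<Rightarrow> complex.
        (\<forall>t \<ge> s - int p + 1. (\<Sum>m = 1..p. c m * xi p \<phi> m t s) = 0)
        \<longrightarrow> (\<forall>m \<in> {1..p}. c m = 0))
   \<and> \<comment> \<open>every solution on Z_{s-p+1} is a linear combination\<close>
     (\<forall>y :: int \<Rightarrow> complex.
        (\<forall>t \<ge> s + 1. y t = (\<Sum>l = 1..p. \<phi> l t * y (t - int l)))
        \<longrightarrow> (\<exists>c :: nat \<Rightarrow> complex. \<forall>t \<ge> s - int p + 1.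
               y t = (\<Sum>m = 1..p. c m * xi p \<phi> m t s)))"
proof (intro conjI allI impI ballI)
  show "xi p \<phi> m t s = (\<Sum>l = 1..p. \<phi> l t * xi p \<phi> m (t - int l) s)"
    if "m \<in> {1..p}" "t \<ge> s + 1" for m t
    using xi_solves_recurrence[OF that(1)] that(2) by (simp add: solves_recurrence_def)
  show "c m = 0" if "\<forall>t \<ge> s - int p + 1. (\<Sum>m = 1..p. c m * xi p \<phi> m t s) = 0" "m \<in> {1..p}"
    for c m
    using that(1)[rule_format, of "s - int m + 1"] that(2) sum_xi_initial[OF that(2), of c] by auto
  fix y assume "\<forall>t \<ge> s + 1. y t = (\<Sum>l = 1..p. \<phi> l t * y (t - int l))"
  then have y: "solves_recurrence p \<phi> s y" by (simp add: solves_recurrence_def)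
  define c where "c m = y (s - int m + 1)" for m
  have "y t = (\<Sum>m = 1..p. c m * xi p \<phi> m t s)" if "t \<ge> s - int p + 1" for t
  proof (rule solves_recurrence_unique[OF y solves_recurrence_sum _ that])
    show "solves_recurrence p \<phi> s (\<lambda>t. xi p \<phi> m t s)" if "m \<in> {1..p}" for m
      using xi_solves_recurrence[OF that] .
    show "y t = (\<Sum>m = 1..p. c m * xi p \<phi> m t s)" if "s - int p + 1 \<le> t" "t \<le> s" for t
    proof -
      have "nat (s - t + 1) \<in> {1..p}" using that by auto
      from sum_xi_initial[OF this, of c \<phi> s] show ?thesis using that by (simp add: c_def)
    qed
  qed
  then show "\<exists>c. \<forall>t \<ge> s - int p + 1. y t = (\<Sum>m = 1..p. c m * xi p \<phi> m t s)" by blast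
qed

end
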